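(* Let $M$ be a finite abelian group of order $m$, $J$ a Jacobi function on $M$, $c\in\hat{M}$ with $c^2=1$, and $i\colon\hat{M}\setminus\{c\}\to\hat{M}\setminus\{1\}$ a bijection with $i(x)=x\,i(x^{-1})$ for all $x\ne c$, such that $J(\alpha,\beta)=\frac{1}{m}\sum_{x\in\hat{M}\setminus\{c\}}\alpha(i(x))\beta(i(x)x^{-1})$ for all $\alpha,\beta\in M$. Let $F=\hat{M}\sqcup\{0\}$ with the operation $\oplus$ for which $0$ is the identity and, for $x,y\ne0$, $x\oplus y=0$ if $x=cy$ and $x\oplus y=x\,i(x/y)^{-1}$ otherwise. Then for all $\alpha,\beta,\gamma\in M$, \[ \sum_{\substack{(x\oplus y)\oplus z=1,\\ x,y,z\in F\setminus\{0\}}}\alpha(x)\beta(y)\gamma(z)=\sum_{\substack{x\oplus(y\oplus z)=1,\\ x,y,z\in F\setminus\{0\}}}\alpha(x)\beta(y)\gamma(z). \]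
   Context: $\hat{M}$ is the Pontryagin dual of $M$, written multiplicatively with identity $1$; for $\alpha\in M$, $x\in\hat{M}$, $\alpha(x)$ is the value of the character $x$ at $\alpha$. $\delta(\alpha)=1$ if $\alpha$ is the identity of $M$ and $0$ otherwise. A Jacobi function on $M$ is a function $J\colon M\times M\to\mathbf{C}$ satisfying: (A) $J(\alpha,\beta)=J(\beta,\alpha)$; (B) with $J^*(\alpha,\beta)=-\delta(\alpha)-\delta(\beta)+J(\alpha,\beta)$, $J^*(\alpha,\beta)J^*(\alpha\beta,\gamma)=J^*(\alpha,\beta\gamma)J^*(\beta,\gamma)$; (C) $\sum_{\beta\in M}J(\alpha_1\beta,\alpha_2\beta^{-1})J(\alpha_3\beta,\alpha_4\beta^{-1})=J(\alpha_1\alpha_4,\alpha_2\alpha_3)$; all for all elements of $M$. *)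

theory Defs
  imports Complex_Main
begin

text \<open>The finite abelian group M is modelled as a finite type of class ab_group_add
  (written additively: the paper's product alpha beta is a + b, the identity is 0,
  beta^-1 is - b).\<close>

definition dual :: "('a::ab_group_add \<Rightarrow> complex) set" where
  "dual = {\<chi>. (\<forall>a b. \<chi> (a + b) = \<chi> a * \<chi> b) \<and> (\<forall>a. cmod (\<chi> a) = 1)}"

definition chmul :: "('a \<Rightarrow> complex) \<Rightarrow> ('a \<Rightarrow> complex) \<Rightarrow> ('a \<Rightarrow> complex)" where
  "chmul x y = (\<lambda>a. x a * y a)"

definition chone :: "'a \<Rightarrow> complex" where
  "chone = (\<lambda>a. 1)"

definition chinv :: "('a \<Rightarrow> complex) \<Rightarrow> ('a \<Rightarrow> complex)" where
  "chinv x = (\<lambda>a. inverse (x a))"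

definition delta :: "'a::zero \<Rightarrow> complex" where
  "delta a = (if a = 0 then 1 else 0)"

definition Jstar :: "('a::ab_group_add \<Rightarrow> 'a \<Rightarrow> complex) \<Rightarrow> 'a \<Rightarrow> 'a \<Rightarrow> complex" where
  "Jstar J a b = - delta a - delta b + J a b"

definition jacobi :: "('a::{ab_group_add,finite} \<Rightarrow> 'a \<Rightarrow> complex) \<Rightarrow> bool" where
  "jacobi J \<longleftrightarrow>
     (\<forall>a b. J a b = J b a) \<and>
     (\<forall>a b g. Jstar J a b * Jstar J (a + b) g = Jstar J a (b + g) * Jstar J b g) \<and>
     (\<forall>a1 a2 a3 a4. (\<Sum>b\<in>UNIV. J (a1 + b) (a2 - b) * J (a3 + b) (a4 - b)) = J (a1 + a4) (a2 + a3))"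

text \<open>F = dual plus a new element 0, modelled by option: None is 0, Some x is x.\<close>
definition oplus :: "('a \<Rightarrow> complex) \<Rightarrow> (('a \<Rightarrow> complex) \<Rightarrow> ('a \<Rightarrow> complex))
    \<Rightarrow> ('a \<Rightarrow> complex) option \<Rightarrow> ('a \<Rightarrow> complex) option \<Rightarrow> ('a \<Rightarrow> complex) option" where
  "oplus c i u v = (case u of None \<Rightarrow> v | Some x \<Rightarrow> (case v of None \<Rightarrow> Some x | Some y \<Rightarrow>
      (if x = chmul c y then None else Some (chmul x (chinv (i (chmul x (chinv y))))))))"

end

theory Submission
  imports Defs "HOL-Library.FuncSet"
begin

(* For nonzero s, u, v in F, the equation u (+) v = s holds exactly when u = s i(t) and
   v = s i(t)/t for a (unique) t <> c.  Hence the solutions of (x (+) y) (+) z = 1 are the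
   triples (c y, y, 1) together with (i(s) i(t), i(s) i(t)/t, i(s)/s) for s, t <> c, and
   summing alpha(x) beta(y) gamma(z) over them gives
     c(alpha) m delta(alpha beta) + m J(alpha beta, gamma) m J(alpha, beta).
   The relation i(x) = x i(x^-1) makes (+) commutative, so the right-hand side is the same
   expression with alpha and gamma exchanged.  The two agree by the cocycle identity (B),
   the symmetry (A) and the values J(alpha, 1) = delta(alpha) - 1/m and
   J(alpha, alpha^-1) = delta(alpha) - c(alpha)/m, which the orthogonality relation
   sum_x x(alpha) = m delta(alpha) yields.  Orthogonality rests on the fact that characters
   separate points, proved by extending characters from a subgroup one cyclic step at a time. *)

section \<open>Extending characters from subgroups\<close>

fun natmul :: "nat \<Rightarrow> 'a::monoid_add \<Rightarrow> 'a" where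
  "natmul 0 g = 0"
| "natmul (Suc n) g = g + natmul n g"

lemma natmul_add: "natmul (m + n) g = natmul m g + natmul n g"
  by (induction m) (simp_all add: add.assoc)

lemma natmul_mult: "natmul (m * n) g = natmul m (natmul n g)"
  by (induction m) (simp_all add: natmul_add)

lemma ex_natmul_eq_0: "\<exists>k>0. natmul k (g::'a::{group_add,finite}) = 0"
proof -
  have "\<not> inj (\<lambda>n. natmul n g)"
    using finite_imageD[of "\<lambda>n. natmul n g" UNIV] by auto
  then obtain p q where "p < q" "natmul p g = natmul q g"
    unfolding inj_def by (metis linorder_neq_iff)
  moreover have "natmul q g = natmul (q - p) g + natmul p g"
    using natmul_add[of "q - p" p g] \<open>p < q\<close> by simp
  ultimately show ?thesis
    by (intro exI[of _ "q - p"]) (metis add_0 add_right_cancel zero_less_diff)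
qed

lemma ex_natmul_eq_uminus: "\<exists>n. - g = natmul n (g::'a::{ab_group_add,finite})"
proof -
  obtain k where "k > 0" "natmul k g = 0" using ex_natmul_eq_0 by blast
  then have "g + natmul (k - 1) g = 0" by (cases k) simp_all
  then show ?thesis by (metis add.commute eq_neg_iff_add_eq_0)
qed

definition add_submonoid :: "'a::monoid_add set \<Rightarrow> bool" where
  "add_submonoid H \<longleftrightarrow> 0 \<in> H \<and> (\<forall>x\<in>H. \<forall>y\<in>H. x + y \<in> H)"

definition char_on :: "'a::plus set \<Rightarrow> ('a \<Rightarrow> complex) \<Rightarrow> bool" where
  "char_on H \<chi> \<longleftrightarrow>
     (\<forall>x\<in>H. \<forall>y\<in>H. \<chi> (x + y) = \<chi> x * \<chi> y) \<and> (\<forall>x\<in>H. cmod (\<chi> x) = 1)"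

lemma dual_eq_char_on_UNIV: "dual = {\<chi>. char_on UNIV \<chi>}"
  by (auto simp: dual_def char_on_def)

lemma add_submonoid_natmul: "add_submonoid H \<Longrightarrow> h \<in> H \<Longrightarrow> natmul n h \<in> H"
  by (induction n) (auto simp: add_submonoid_def)

lemma add_submonoid_diff:
  fixes H :: "'a::{ab_group_add,finite} set"
  assumes "add_submonoid H" "x \<in> H" "y \<in> H"
  shows "x - y \<in> H"
proof -
  obtain n where n: "x - y = x + natmul n y"
    using ex_natmul_eq_uminus[of y] by (metis diff_conv_add_uminus)
  show ?thesis
    unfolding n using assms add_submonoid_natmul[OF assms(1,3)] by (simp add: add_submonoid_def)
qed

lemma char_on_zero:
  fixes H :: "'a::monoid_add set"
  assumes "char_on H \<chi>" "0 \<in> H"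
  shows "\<chi> 0 = 1"
proof -
  have "\<chi> (0 + 0) = \<chi> 0 * \<chi> 0" and "cmod (\<chi> 0) = 1"
    using assms unfolding char_on_def by blast+
  then show ?thesis by auto
qed

lemma char_on_natmul:
  fixes H :: "'a::monoid_add set"
  assumes "char_on H \<chi>" "add_submonoid H" "h \<in> H"
  shows "\<chi> (natmul n h) = \<chi> h ^ n"
proof (induction n)
  case 0
  show ?case using char_on_zero[OF assms(1)] assms(2) by (simp add: add_submonoid_def)
next
  case (Suc n)
  have "\<chi> (h + natmul n h) = \<chi> h * \<chi> (natmul n h)"
    using assms add_submonoid_natmul unfolding char_on_def by blast
  then show ?case using Suc by simp
qed

lemma least_natmul_mem:
  fixes H :: "'a::{group_add,finite} set"
  assumes "add_submonoid H" "k = (LEAST k. 0 < k \<and> natmul k g \<in> H)"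
  shows "0 < k" "natmul k g \<in> H"
proof -
  obtain k0 where "0 < k0" "natmul k0 g = 0" using ex_natmul_eq_0 by blast
  then have "0 < k \<and> natmul k g \<in> H"
    using assms LeastI[of "\<lambda>k. 0 < k \<and> natmul k g \<in> H" k0] by (simp add: add_submonoid_def)
  then show "0 < k" "natmul k g \<in> H" by blast+
qed

lemma least_natmul_dvd:
  fixes H :: "'a::{ab_group_add,finite} set"
  assumes H: "add_submonoid H" and k: "k = (LEAST k. 0 < k \<and> natmul k g \<in> H)"
    and n: "natmul n g \<in> H"
  shows "k dvd n"
proof -
  have "natmul n g = natmul (n mod k) g + natmul (n div k) (natmul k g)"
    by (metis natmul_add natmul_mult mod_div_decomp add.commute)
  then have "natmul (n mod k) g = natmul n g - natmul (n div k) (natmul k g)"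
    by (simp add: algebra_simps)
  also have "\<dots> \<in> H"
    using add_submonoid_diff add_submonoid_natmul least_natmul_mem[OF H k] H n by blast
  finally have "natmul (n mod k) g \<in> H" .
  moreover have "n mod k < k" using least_natmul_mem(1)[OF H k] by simp
  ultimately have "\<not> 0 < n mod k" using not_less_Least k by blast
  then show ?thesis by auto
qed

lemma char_on_natmul_eq_power:
  fixes H :: "'a::{ab_group_add,finite} set"
  assumes H: "add_submonoid H" and "char_on H \<chi>"
    and k: "k = (LEAST k. 0 < k \<and> natmul k g \<in> H)" and w: "w ^ k = \<chi> (natmul k g)"
    and n: "natmul n g \<in> H"
  shows "\<chi> (natmul n g) = w ^ n"
proof -
  obtain q where q: "n = k * q" using least_natmul_dvd[OF H k n] by blast
  have "\<chi> (natmul n g) = \<chi> (natmul q (natmul k g))"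
    unfolding q by (metis natmul_mult mult.commute)
  also have "\<dots> = (w ^ k) ^ q"
    unfolding w using char_on_natmul assms least_natmul_mem(2)[OF H k] by blast
  finally show ?thesis by (simp add: q power_mult)
qed

lemma add_submonoid_extend:
  fixes H :: "'a::comm_monoid_add set"
  assumes "add_submonoid H"
  shows "add_submonoid {h + natmul j g | h j. h \<in> H}"
  unfolding add_submonoid_def
proof safe
  show "\<exists>h j. 0 = h + natmul j g \<and> h \<in> H"
    using assms by (intro exI[of _ 0] exI[of _ 0]) (simp add: add_submonoid_def)
next
  fix h1 h2 j1 j2 assume "h1 \<in> H" "h2 \<in> H"
  then show "\<exists>h j. h1 + natmul j1 g + (h2 + natmul j2 g) = h + natmul j g \<and> h \<in> H"
    using assms by (intro exI[of _ "h1 + h2"] exI[of _ "j1 + j2"])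
      (simp add: add_submonoid_def natmul_add algebra_simps)
qed

lemma char_on_extend_well_defined:
  fixes H :: "'a::{ab_group_add,finite} set"
  assumes H: "add_submonoid H" and \<chi>: "char_on H \<chi>"
    and compat: "\<And>n. natmul n g \<in> H \<Longrightarrow> \<chi> (natmul n g) = w ^ n"
    and "h1 \<in> H" "h2 \<in> H" "h1 + natmul j1 g = h2 + natmul j2 g"
  shows "\<chi> h1 * w ^ j1 = \<chi> h2 * w ^ j2"
proof -
  have "\<chi> h1 * w ^ j1 = \<chi> h2 * w ^ j2"
    if "h1 \<in> H" "h2 \<in> H" "h1 + natmul j1 g = h2 + natmul j2 g" "j1 \<le> j2" for h1 h2 j1 j2
  proof -
    have "natmul j2 g = natmul (j2 - j1) g + natmul j1 g"
      using natmul_add[of "j2 - j1" j1 g] that(4) by simp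
    then have "natmul (j2 - j1) g = h1 - h2"
      using that(3) by (simp add: algebra_simps)
    moreover have "h1 - h2 \<in> H" using add_submonoid_diff H that by blast
    ultimately have "\<chi> (h1 - h2) = w ^ (j2 - j1)" using compat by metis
    moreover have "\<chi> h1 = \<chi> (h1 - h2) * \<chi> h2"
      using \<chi> \<open>h1 - h2 \<in> H\<close> that(2) unfolding char_on_def by (metis diff_add_cancel)
    ultimately show ?thesis
      using that(4) by (simp add: power_add[symmetric])
  qed
  then show ?thesis using assms(4-6) by (metis nle_le)
qed

lemma char_on_extend:
  fixes H :: "'a::{ab_group_add,finite} set"
  assumes H: "add_submonoid H" and \<chi>: "char_on H \<chi>" and w: "cmod w = 1"
    and compat: "\<And>n. natmul n g \<in> H \<Longrightarrow> \<chi> (natmul n g) = w ^ n"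
  obtains H' \<chi>' where "add_submonoid H'" "insert g H \<subseteq> H'" "char_on H' \<chi>'"
    "\<And>h. h \<in> H \<Longrightarrow> \<chi>' h = \<chi> h" "\<chi>' g = w"
proof -
  define H' where "H' = {h + natmul j g | h j. h \<in> H}"
  define \<chi>' where
    "\<chi>' x = (SOME y. \<exists>h\<in>H. \<exists>j. x = h + natmul j g \<and> y = \<chi> h * w ^ j)" for x
  have \<chi>'_eq: "\<chi>' (h + natmul j g) = \<chi> h * w ^ j" if "h \<in> H" for h j
  proof -
    have "\<exists>h'\<in>H. \<exists>j'. h + natmul j g = h' + natmul j' g \<and>
        \<chi>' (h + natmul j g) = \<chi> h' * w ^ j'"
      unfolding \<chi>'_def by (rule someI_ex) (use that in blast)
    then show ?thesis using char_on_extend_well_defined[OF H \<chi> compat] that by metis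
  qed
  show ?thesis
  proof
    show "add_submonoid H'" unfolding H'_def using H by (rule add_submonoid_extend)
    have "g = 0 + natmul 1 g" "\<And>h. h = h + natmul 0 g" by simp_all
    then show "insert g H \<subseteq> H'"
      unfolding H'_def using H unfolding add_submonoid_def by blast
    show "char_on H' \<chi>'"
      unfolding char_on_def H'_def
    proof safe
      fix h1 h2 j1 j2 assume h12: "h1 \<in> H" "h2 \<in> H"
      have sum: "h1 + natmul j1 g + (h2 + natmul j2 g) = (h1 + h2) + natmul (j1 + j2) g"
        by (simp add: natmul_add algebra_simps)
      have "h1 + h2 \<in> H" using H h12 unfolding add_submonoid_def by blast
      then have "\<chi>' (h1 + natmul j1 g + (h2 + natmul j2 g)) = \<chi> (h1 + h2) * w ^ (j1 + j2)"
        unfolding sum by (rule \<chi>'_eq)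
      also have "\<dots> = (\<chi> h1 * w ^ j1) * (\<chi> h2 * w ^ j2)"
        using \<chi> h12 unfolding char_on_def by (simp add: power_add mult_ac)
      finally show "\<chi>' (h1 + natmul j1 g + (h2 + natmul j2 g)) =
          \<chi>' (h1 + natmul j1 g) * \<chi>' (h2 + natmul j2 g)"
        using \<chi>'_eq h12 by simp
    next
      fix h j assume "h \<in> H"
      then show "cmod (\<chi>' (h + natmul j g)) = 1"
        using \<chi> w by (simp add: \<chi>'_eq char_on_def norm_mult norm_power)
    qed
    show "\<chi>' h = \<chi> h" if "h \<in> H" for h
      using \<chi>'_eq[OF that, of 0] by simp
    show "\<chi>' g = w"
      using \<chi>'_eq[of 0 1] char_on_zero[OF \<chi>] H by (simp add: add_submonoid_def)
  qed
qed

lemma ex_unit_nth_root: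
  assumes "cmod z = 1" "0 < k"
  shows "\<exists>w. cmod w = 1 \<and> w ^ k = z"
proof -
  have "z \<noteq> 0" using assms(1) by auto
  then have "cis (Arg z / k) ^ k = z"
    using assms by (simp add: DeMoivre cis_Arg sgn_eq)
  then show ?thesis by (intro exI[of _ "cis (Arg z / k)"]) simp
qed

lemma ex_nontrivial_root_of_unity:
  assumes "2 \<le> k"
  shows "\<exists>w::complex. cmod w = 1 \<and> w ^ k = 1 \<and> w \<noteq> 1"
proof -
  have "\<not> {w::complex. w ^ k = 1} \<subseteq> {1}"
    using card_mono[of "{1::complex}" "{w. w ^ k = 1}"] card_roots_unity_eq[of k] assms by auto
  then obtain w :: complex where "w ^ k = 1" "w \<noteq> 1" by blast
  moreover have "cmod w = 1" using power_eq_1_iff[OF \<open>w ^ k = 1\<close>] assms by simp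
  ultimately show ?thesis by blast
qed

lemma char_on_extend_to_dual:
  fixes H :: "'a::{ab_group_add,finite} set"
  assumes "add_submonoid H" "char_on H \<chi>"
  shows "\<exists>\<psi>\<in>dual. \<forall>h\<in>H. \<psi> h = \<chi> h"
  using assms
proof (induction "card (- H)" arbitrary: H \<chi> rule: less_induct)
  case less
  show ?case
  proof (cases "H = UNIV")
    case True
    then show ?thesis using less.prems by (auto simp: dual_eq_char_on_UNIV)
  next
    case False
    then obtain g where g: "g \<notin> H" by blast
    define k where "k = (LEAST k. 0 < k \<and> natmul k g \<in> H)"
    have "cmod (\<chi> (natmul k g)) = 1"
      using least_natmul_mem(2)[OF less.prems(1) k_def] less.prems(2) by (simp add: char_on_def)
    then obtain w where w: "cmod w = 1" "w ^ k = \<chi> (natmul k g)"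
      using ex_unit_nth_root least_natmul_mem(1)[OF less.prems(1) k_def] by blast
    obtain H' \<chi>' where H': "add_submonoid H'" "insert g H \<subseteq> H'" "char_on H' \<chi>'"
      and \<chi>': "\<And>h. h \<in> H \<Longrightarrow> \<chi>' h = \<chi> h"
      using char_on_extend[OF less.prems w(1) char_on_natmul_eq_power[OF less.prems k_def w(2)]] by blast
    have "card (- H') < card (- H)"
      using H'(2) g by (intro psubset_card_mono) auto
    then obtain \<psi> where "\<psi> \<in> dual" "\<forall>h\<in>H'. \<psi> h = \<chi>' h"
      using less.hyps H'(1,3) by blast
    with H'(2) \<chi>' show ?thesis by (intro bexI[of _ \<psi>]) auto
  qed
qed

lemma dual_separates:
  fixes a :: "'a::{ab_group_add,finite}"
  assumes "a \<noteq> 0"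
  shows "\<exists>\<psi>\<in>dual. \<psi> a \<noteq> 1"
proof -
  define k where "k = (LEAST k. 0 < k \<and> natmul k a \<in> {0})"
  have triv: "add_submonoid {0::'a}" "char_on {0::'a} (\<lambda>_. 1)"
    by (simp_all add: add_submonoid_def char_on_def)
  have "k \<noteq> 1" using least_natmul_mem(2)[OF triv(1) k_def] assms by auto
  then have "2 \<le> k" using least_natmul_mem(1)[OF triv(1) k_def] by linarith
  then obtain w where w: "cmod w = 1" "w ^ k = 1" "w \<noteq> 1"
    using ex_nontrivial_root_of_unity by blast
  obtain H' \<chi>' where H': "add_submonoid H'" "insert a {0} \<subseteq> H'" "char_on H' \<chi>'"
    and "\<chi>' a = w"
    using char_on_extend[OF triv w(1) char_on_natmul_eq_power[OF triv k_def]] w(2) by metis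
  obtain \<psi> where "\<psi> \<in> dual" "\<forall>h\<in>H'. \<psi> h = \<chi>' h"
    using char_on_extend_to_dual[OF H'(1,3)] by blast
  moreover have "a \<in> H'" using H'(2) by blast
  ultimately show ?thesis using \<open>\<chi>' a = w\<close> w(3) by (intro bexI[of _ \<psi>]) auto
qed

section \<open>Orthogonality of characters\<close>

lemma dual_add: "x \<in> dual \<Longrightarrow> x (a + b) = x a * x b"
  by (simp add: dual_def)

lemma dual_nonzero: "x \<in> dual \<Longrightarrow> x a \<noteq> 0"
  by (auto simp: dual_def dest: spec[of _ a])

lemma dual_zero: "x \<in> dual \<Longrightarrow> x 0 = 1"
  using char_on_zero[of UNIV x] by (simp add: dual_eq_char_on_UNIV)

lemma dual_uminus: "x \<in> dual \<Longrightarrow> x (- a) = inverse (x a)"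
  using dual_add[of x a "- a"] by (simp add: dual_zero dual_nonzero inverse_unique)

lemma chmul_dual: "x \<in> dual \<Longrightarrow> y \<in> dual \<Longrightarrow> chmul x y \<in> dual"
  by (auto simp: dual_def chmul_def norm_mult)

lemma chinv_dual: "x \<in> dual \<Longrightarrow> chinv x \<in> dual"
  by (auto simp: dual_def chinv_def norm_inverse)

lemma chone_dual: "chone \<in> dual"
  by (auto simp: dual_def chone_def)

lemma finite_dual: "finite (dual :: ('a::{ab_group_add,finite} \<Rightarrow> complex) set)"
proof -
  define ord where "ord a = (SOME k. 0 < k \<and> natmul k a = 0)" for a :: 'a
  have ord: "0 < ord a \<and> natmul (ord a) a = 0" for a
    unfolding ord_def by (rule someI_ex) (rule ex_natmul_eq_0)
  have "x a ^ ord a = 1" if "x \<in> dual" for x a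
    using char_on_natmul[of UNIV x a "ord a"] ord[of a] that
    by (simp add: dual_eq_char_on_UNIV add_submonoid_def dual_zero)
  then have "dual \<subseteq> Pi UNIV (\<lambda>a. {z::complex. z ^ ord a = 1})" by (auto simp: Pi_def)
  moreover have "finite {z::complex. z ^ ord a = 1}" for a
    using ord[of a] by (intro finite_roots_unity) simp
  then have "finite (Pi UNIV (\<lambda>a. {z::complex. z ^ ord a = 1}))"
    using finite_PiE[of UNIV "\<lambda>a. {z::complex. z ^ ord a = 1}"] by (simp add: PiE_UNIV_domain)
  ultimately show ?thesis by (rule finite_subset)
qed

lemma sum_dual_shift:
  assumes "\<psi> \<in> dual"
  shows "(\<Sum>x\<in>dual. f (chmul \<psi> x)) = (\<Sum>x\<in>dual. f x)"
proof (rule sum.reindex_bij_betw)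
  show "bij_betw (chmul \<psi>) dual dual"
  proof (rule bij_betw_byWitness[where f' = "chmul (chinv \<psi>)"])
    show "\<forall>x\<in>dual. chmul (chinv \<psi>) (chmul \<psi> x) = x"
      and "\<forall>x\<in>dual. chmul \<psi> (chmul (chinv \<psi>) x) = x"
      using dual_nonzero[OF assms] by (auto simp: chmul_def chinv_def fun_eq_iff)
    show "chmul \<psi> ` dual \<subseteq> dual" "chmul (chinv \<psi>) ` dual \<subseteq> dual"
      using assms chmul_dual chinv_dual by auto
  qed
qed

lemma sum_character_eq_0:
  fixes x :: "'a::{ab_group_add,finite} \<Rightarrow> complex"
  assumes x: "x \<in> dual" and "x \<noteq> chone"
  shows "(\<Sum>a\<in>UNIV. x a) = 0"
proof -
  obtain b where b: "x b \<noteq> 1" using assms(2) by (auto simp: chone_def)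
  have "(\<Sum>a\<in>UNIV. x (b + a)) = (\<Sum>a\<in>UNIV. x a)"
    by (rule sum.reindex_bij_betw) (rule bij_betw_byWitness[where f' = "\<lambda>a. a - b"], auto)
  then have "(x b - 1) * (\<Sum>a\<in>UNIV. x a) = 0"
    by (simp add: dual_add[OF x] sum_distrib_left algebra_simps)
  then show ?thesis using b by simp
qed

lemma sum_dual_eq_0:
  fixes a :: "'a::{ab_group_add,finite}"
  assumes "a \<noteq> 0"
  shows "(\<Sum>x\<in>dual. x a) = 0"
proof -
  obtain \<psi> where \<psi>: "\<psi> \<in> dual" "\<psi> a \<noteq> 1" using dual_separates[OF assms] by blast
  have "(\<Sum>x\<in>dual. chmul \<psi> x a) = (\<Sum>x\<in>dual. x a)"
    using sum_dual_shift[OF \<psi>(1), of "\<lambda>x. x a"] .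
  then have "\<psi> a * (\<Sum>x\<in>dual. x a) = (\<Sum>x\<in>dual. x a)"
    by (simp add: chmul_def sum_distrib_left)
  then have "(\<psi> a - 1) * (\<Sum>x\<in>dual. x a) = 0"
    by (simp add: algebra_simps)
  then show ?thesis using \<psi>(2) by simp
qed

lemma card_dual: "card (dual :: ('a::{ab_group_add,finite} \<Rightarrow> complex) set) = card (UNIV :: 'a set)"
proof -
  let ?D = "dual :: ('a \<Rightarrow> complex) set"
  have "(\<Sum>a\<in>UNIV. \<Sum>x\<in>?D. x a) = (\<Sum>a::'a\<in>UNIV. if a = 0 then of_nat (card ?D) else 0)"
    by (intro sum.cong) (auto simp: sum_dual_eq_0 dual_zero)
  then have "of_nat (card ?D) = (\<Sum>a\<in>UNIV. \<Sum>x\<in>?D. x a)"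
    by simp
  also have "\<dots> = (\<Sum>x\<in>?D. \<Sum>a\<in>UNIV. x a)"
    by (rule sum.swap)
  also have "\<dots> = (\<Sum>x\<in>?D. if x = chone then of_nat (card (UNIV :: 'a set)) else 0)"
    by (rule sum.cong) (auto simp: sum_character_eq_0 chone_def)
  also have "\<dots> = of_nat (card (UNIV :: 'a set))"
    using chone_dual by (simp add: finite_dual)
  finally show ?thesis by (simp only: of_nat_eq_iff)
qed

lemma sum_dual:
  fixes a :: "'a::{ab_group_add,finite}"
  shows "(\<Sum>x\<in>dual. x a) = of_nat (card (UNIV :: 'a set)) * delta a"
  using sum_dual_eq_0[of a] card_dual[where 'a = 'a] by (simp add: delta_def dual_zero)

section \<open>The operation on F\<close>

locale dual_oplus =
  fixes c :: "'a::{ab_group_add,finite} \<Rightarrow> complex"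
    and i :: "('a \<Rightarrow> complex) \<Rightarrow> ('a \<Rightarrow> complex)"
  assumes c_dual: "c \<in> dual"
    and c_square: "chmul c c = chone"
    and i_bij: "bij_betw i (dual - {c}) (dual - {chone})"
    and i_chinv: "\<forall>x\<in>dual - {c}. i x = chmul x (i (chinv x))"
begin

abbreviation oplus_F (infixl "\<oplus>" 65) where "u \<oplus> v \<equiv> oplus c i u v"

lemma chmul_chone [simp]: "chmul chone x = x"
  by (simp add: chmul_def chone_def)

lemma i_dual: "t \<in> dual \<Longrightarrow> t \<noteq> c \<Longrightarrow> i t \<in> dual"
  using bij_betw_apply[OF i_bij] by blast

lemma c_mult_c: "c a * c a = 1"
  using fun_cong[OF c_square, of a] by (simp add: chmul_def chone_def)

lemma c_uminus: "c (- a) = c a"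
  using c_mult_c[of a] by (simp add: dual_uminus[OF c_dual] inverse_unique)

lemma oplus_Some_dual:
  assumes "u \<in> dual" "v \<in> dual" "Some u \<oplus> Some v = Some w"
  shows "w \<in> dual"
proof -
  define t where "t = chmul u (chinv v)"
  have "t \<in> dual" unfolding t_def using assms chmul_dual chinv_dual by blast
  moreover have "t \<noteq> c" and w: "w = chmul u (chinv (i t))"
    using assms(3) dual_nonzero[OF assms(2)]
    by (auto simp: oplus_def t_def chmul_def chinv_def fun_eq_iff field_simps split: if_splits)
  ultimately show ?thesis unfolding w using assms(1) i_dual chmul_dual chinv_dual by blast
qed

lemma oplus_eq_Some_iff:
  assumes u: "u \<in> dual" and v: "v \<in> dual"
  shows "Some u \<oplus> Some v = Some s \<longleftrightarrow>
    (\<exists>t\<in>dual - {c}. u = chmul s (i t) \<and> v = chmul (chmul s (i t)) (chinv t))"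
proof
  assume uv: "Some u \<oplus> Some v = Some s"
  define t where "t = chmul u (chinv v)"
  have t: "t \<in> dual" unfolding t_def using u v chmul_dual chinv_dual by blast
  have "t \<noteq> c" and s: "s = chmul u (chinv (i t))"
    using uv dual_nonzero[OF v]
    by (auto simp: oplus_def t_def chmul_def chinv_def fun_eq_iff field_simps split: if_splits)
  moreover have "u = chmul s (i t)" "v = chmul (chmul s (i t)) (chinv t)"
    using dual_nonzero[OF i_dual[OF t \<open>t \<noteq> c\<close>]] dual_nonzero[OF u] dual_nonzero[OF v]
    by (auto simp: s t_def chmul_def chinv_def fun_eq_iff field_simps)
  ultimately show "\<exists>t\<in>dual - {c}. u = chmul s (i t) \<and> v = chmul (chmul s (i t)) (chinv t)"
    using t by blast
next
  assume "\<exists>t\<in>dual - {c}. u = chmul s (i t) \<and> v = chmul (chmul s (i t)) (chinv t)"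
  then obtain t where t: "t \<in> dual" "t \<noteq> c"
    and uv: "u = chmul s (i t)" "v = chmul (chmul s (i t)) (chinv t)" by blast
  have nz: "\<And>a. s a \<noteq> 0" "\<And>a. i t a \<noteq> 0" "\<And>a. t a \<noteq> 0"
    using dual_nonzero[OF u] dual_nonzero[OF i_dual[OF t]] dual_nonzero[OF t(1)]
    by (auto simp: uv chmul_def)
  have "chmul u (chinv v) = t" "u \<noteq> chmul c v" "chmul u (chinv (i t)) = s"
    using nz t(2) by (auto simp: uv chmul_def chinv_def fun_eq_iff field_simps)
  then show "Some u \<oplus> Some v = Some s" by (simp add: oplus_def)
qed

lemma eq_chmul_c_iff: "x = chmul c y \<longleftrightarrow> y = chmul c x"
proof -
  have "chmul c (chmul c y) = y" for y
    by (simp add: chmul_def fun_eq_iff c_mult_c mult.assoc[symmetric])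
  then show ?thesis by metis
qed

lemma oplus_commute:
  assumes x: "x \<in> dual" and y: "y \<in> dual"
  shows "Some x \<oplus> Some y = Some y \<oplus> Some x"
proof (cases "x = chmul c y")
  case True
  then have "y = chmul c x" using eq_chmul_c_iff by blast
  then show ?thesis using True by (simp add: oplus_def)
next
  case False
  define t where "t = chmul x (chinv y)"
  have t: "t \<in> dual" unfolding t_def using x y chmul_dual chinv_dual by blast
  have "t \<noteq> c"
    using False dual_nonzero[OF y] by (auto simp: t_def chmul_def chinv_def fun_eq_iff field_simps)
  then have "i t = chmul t (i (chmul y (chinv x)))"
    using i_chinv t by (simp add: t_def chinv_def chmul_def fun_eq_iff mult.commute)
  then have "chmul x (chinv (i t)) = chmul y (chinv (i (chmul y (chinv x))))"
    using dual_nonzero[OF x] dual_nonzero[OF y] by (simp add: t_def chmul_def chinv_def fun_eq_iff)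
  moreover have "y \<noteq> chmul c x" using False eq_chmul_c_iff by blast
  ultimately show ?thesis using False by (simp add: oplus_def t_def)
qed

definition left_solutions :: "(('a \<Rightarrow> complex) \<times> ('a \<Rightarrow> complex) \<times> ('a \<Rightarrow> complex)) set" where
  "left_solutions = {(x, y, z). x \<in> dual \<and> y \<in> dual \<and> z \<in> dual \<and>
     (Some x \<oplus> Some y) \<oplus> Some z = Some chone}"

definition right_solutions :: "(('a \<Rightarrow> complex) \<times> ('a \<Rightarrow> complex) \<times> ('a \<Rightarrow> complex)) set" where
  "right_solutions = {(x, y, z). x \<in> dual \<and> y \<in> dual \<and> z \<in> dual \<and>
     Some x \<oplus> (Some y \<oplus> Some z) = Some chone}"

lemma oplus_right_eq_left_swap:
  assumes "x \<in> dual" "y \<in> dual" "z \<in> dual"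
  shows "Some x \<oplus> (Some y \<oplus> Some z) = (Some z \<oplus> Some y) \<oplus> Some x"
proof (cases "Some y \<oplus> Some z")
  case None
  then show ?thesis using oplus_commute[OF assms(2,3)] by (simp add: oplus_def)
next
  case (Some w)
  then show ?thesis
    using oplus_commute[OF assms(2,3)] oplus_commute[OF assms(1) oplus_Some_dual[OF assms(2,3)]]
    by simp
qed

lemma right_solutions_eq: "right_solutions = (\<lambda>(x, y, z). (z, y, x)) ` left_solutions"
proof -
  have "right_solutions = {(x, y, z). (z, y, x) \<in> left_solutions}"
    by (auto simp: right_solutions_def left_solutions_def oplus_right_eq_left_swap)
  also have "\<dots> = (\<lambda>(x, y, z). (z, y, x)) ` left_solutions"
    by (auto simp: image_iff intro: bexI[rotated])
  finally show ?thesis .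
qed

lemma sum_right_solutions:
  "(\<Sum>(x, y, z)\<in>right_solutions. x a * y b * z g)
     = (\<Sum>(x, y, z)\<in>left_solutions. x g * y b * z a)"
proof -
  have "inj_on (\<lambda>(x, y, z). (z, y, x)) left_solutions"
    by (auto simp: inj_on_def)
  then show ?thesis
    unfolding right_solutions_eq by (subst sum.reindex) (auto simp: mult_ac intro!: sum.cong)
qed

definition left_solution_param :: "('a \<Rightarrow> complex) \<Rightarrow> ('a \<Rightarrow> complex)
    \<Rightarrow> ('a \<Rightarrow> complex) \<times> ('a \<Rightarrow> complex) \<times> ('a \<Rightarrow> complex)" where
  "left_solution_param s t =
     (chmul (i s) (i t), chmul (chmul (i s) (i t)) (chinv t), chmul (i s) (chinv s))"

(* Degenerate solutions have x (+) y = 0, forcing z = 1; otherwise x (+) y = i s and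
   z = i s / s, and (x, y) is the solution of x (+) y = i s with parameter t. *)
lemma left_solutions_eq:
  "left_solutions = (\<lambda>y. (chmul c y, y, chone)) ` dual \<union>
     (\<lambda>(s, t). left_solution_param s t) ` ((dual - {c}) \<times> (dual - {c}))"
  (is "_ = ?deg \<union> ?gen")
proof (intro equalityI subsetI)
  fix p assume "p \<in> left_solutions"
  then obtain x y z where p: "p = (x, y, z)" and xyz: "x \<in> dual" "y \<in> dual" "z \<in> dual"
    and eq: "(Some x \<oplus> Some y) \<oplus> Some z = Some chone"
    by (auto simp: left_solutions_def)
  show "p \<in> ?deg \<union> ?gen"
  proof (cases "Some x \<oplus> Some y")
    case None
    then have "x = chmul c y" "z = chone" using eq by (simp_all add: oplus_def split: if_splits)
    then show ?thesis using p xyz by blast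
  next
    case (Some w)
    have "w \<in> dual" using oplus_Some_dual[OF xyz(1,2) Some] .
    moreover have "Some w \<oplus> Some z = Some chone" using eq Some by simp
    ultimately obtain s where s: "s \<in> dual - {c}" "w = i s" "z = chmul (i s) (chinv s)"
      using oplus_eq_Some_iff[OF _ xyz(3)] by auto
    moreover obtain t where "t \<in> dual - {c}"
      and "x = chmul w (i t)" "y = chmul (chmul w (i t)) (chinv t)"
      using Some oplus_eq_Some_iff[OF xyz(1,2)] by auto
    ultimately have "p = left_solution_param s t" "(s, t) \<in> (dual - {c}) \<times> (dual - {c})"
      using p by (simp_all add: left_solution_param_def)
    then show ?thesis by blast
  qed
next
  fix p assume "p \<in> ?deg \<union> ?gen"
  then show "p \<in> left_solutions"
  proof
    assume "p \<in> ?deg"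
    then show ?thesis
      using chmul_dual[OF c_dual] chone_dual by (auto simp: left_solutions_def oplus_def)
  next
    assume "p \<in> ?gen"
    then obtain s t where st: "s \<in> dual - {c}" "t \<in> dual - {c}"
      and p: "p = left_solution_param s t" by auto
    have is_dual: "i s \<in> dual" and it_dual: "i t \<in> dual" using st i_dual by auto
    have x: "chmul (i s) (i t) \<in> dual" using is_dual it_dual chmul_dual by blast
    have y: "chmul (chmul (i s) (i t)) (chinv t) \<in> dual" using x st chmul_dual chinv_dual by blast
    have z: "chmul (i s) (chinv s) \<in> dual" using is_dual st chmul_dual chinv_dual by blast
    have "Some (chmul (i s) (i t)) \<oplus> Some (chmul (chmul (i s) (i t)) (chinv t)) = Some (i s)"
      using oplus_eq_Some_iff[OF x y] st by blast
    moreover have "Some (i s) \<oplus> Some (chmul (i s) (chinv s)) = Some chone"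
      using oplus_eq_Some_iff[OF is_dual z] st by auto
    ultimately show ?thesis using x y z by (simp add: p left_solution_param_def left_solutions_def)
  qed
qed

lemma inj_on_left_solution_param:
  "inj_on (\<lambda>(s, t). left_solution_param s t) ((dual - {c}) \<times> (dual - {c}))"
proof (rule inj_onI)
  fix p q assume "p \<in> (dual - {c}) \<times> (dual - {c})" "q \<in> (dual - {c}) \<times> (dual - {c})"
    and eq: "(\<lambda>(s, t). left_solution_param s t) p = (\<lambda>(s, t). left_solution_param s t) q"
  then obtain s t s' t' where pq: "p = (s, t)" "q = (s', t')"
    and st: "s \<in> dual - {c}" "t \<in> dual - {c}" "s' \<in> dual - {c}" "t' \<in> dual - {c}"
    by auto
  have nz: "\<And>a. i s a \<noteq> 0" "\<And>a. i t a \<noteq> 0" "\<And>a. i s' a \<noteq> 0" "\<And>a. i t' a \<noteq> 0"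
    using dual_nonzero i_dual st by blast+
  have "t = t'"
    using eq nz by (auto simp: pq left_solution_param_def chmul_def chinv_def fun_eq_iff field_simps)
  moreover have "i s = i s'"
    using eq nz unfolding pq \<open>t = t'\<close> by (auto simp: left_solution_param_def chmul_def fun_eq_iff)
  then have "s = s'"
    using inj_onD[OF bij_betw_imp_inj_on[OF i_bij]] st by blast
  ultimately show "p = q" by (simp add: pq)
qed

lemma left_solution_param_notin_degenerate:
  assumes "s \<in> dual - {c}" "t \<in> dual - {c}"
  shows "left_solution_param s t \<notin> (\<lambda>y. (chmul c y, y, chone)) ` dual"
proof
  assume "left_solution_param s t \<in> (\<lambda>y. (chmul c y, y, chone)) ` dual"
  then have "chmul (i s) (i t) = chmul c (chmul (chmul (i s) (i t)) (chinv t))"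
    by (auto simp: left_solution_param_def)
  moreover have "\<And>a. i s a \<noteq> 0" "\<And>a. i t a \<noteq> 0" "\<And>a. t a \<noteq> 0"
    using dual_nonzero i_dual assms by blast+
  ultimately have "t = c" by (auto simp: chmul_def chinv_def fun_eq_iff field_simps)
  then show False using assms by blast
qed

(* m J, in the notation of the paper. *)
definition Jsum :: "'a \<Rightarrow> 'a \<Rightarrow> complex" where
  "Jsum a b = (\<Sum>t\<in>dual - {c}. i t a * chmul (i t) (chinv t) b)"

lemma sum_left_solutions:
  "(\<Sum>(x, y, z)\<in>left_solutions. x a * y b * z g)
     = c a * (\<Sum>x\<in>dual. x (a + b)) + Jsum (a + b) g * Jsum a b"
proof -
  define P where "P = (dual - {c}) \<times> (dual - {c})"
  let ?deg = "(\<lambda>y. (chmul c y, y, chone)) ` dual"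
    and ?gen = "(\<lambda>(s, t). left_solution_param s t) ` P"
  let ?f = "\<lambda>(x, y, z). x a * y b * z g"
  have fin: "finite ?deg" "finite ?gen" unfolding P_def using finite_dual by blast+
  have disj: "?deg \<inter> ?gen = {}"
  proof (rule equals0I)
    fix p assume p: "p \<in> ?deg \<inter> ?gen"
    then obtain s t where "(s, t) \<in> P" "p = left_solution_param s t" by auto
    then show False using p left_solution_param_notin_degenerate unfolding P_def by blast
  qed
  have "sum ?f ?deg = (\<Sum>y\<in>dual. c a * y (a + b))"
    by (subst sum.reindex) (auto simp: inj_on_def chmul_def chone_def dual_add intro!: sum.cong)
  also have "\<dots> = c a * (\<Sum>x\<in>dual. x (a + b))" by (simp add: sum_distrib_left)
  finally have deg: "sum ?f ?deg = c a * (\<Sum>x\<in>dual. x (a + b))" .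
  have "sum ?f ?gen = (\<Sum>(s, t)\<in>P.
      (i s (a + b) * chmul (i s) (chinv s) g) * (i t a * chmul (i t) (chinv t) b))"
    unfolding P_def sum.reindex[OF inj_on_left_solution_param]
    by (intro sum.cong) (auto simp: left_solution_param_def chmul_def chinv_def dual_add i_dual mult_ac)
  also have "\<dots> = Jsum (a + b) g * Jsum a b"
    by (simp add: P_def Jsum_def sum_product sum.cartesian_product)
  finally have gen: "sum ?f ?gen = Jsum (a + b) g * Jsum a b" .
  show ?thesis
    unfolding left_solutions_eq P_def[symmetric] sum.union_disjoint[OF fin disj] deg gen ..
qed

lemma Jsum_zero_right: "Jsum a 0 = of_nat (card (UNIV :: 'a set)) * delta a - 1"
proof -
  have "Jsum a 0 = (\<Sum>t\<in>dual - {c}. i t a)"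
    unfolding Jsum_def by (intro sum.cong) (auto simp: chmul_def chinv_def dual_zero i_dual)
  also have "\<dots> = (\<Sum>u\<in>dual - {chone}. u a)"
    using sum.reindex_bij_betw[OF i_bij, of "\<lambda>u. u a"] .
  also have "\<dots> = (\<Sum>u\<in>dual. u a) - 1"
    using sum.remove[OF finite_dual chone_dual, of "\<lambda>u. u a"] by (simp add: chone_def)
  finally show ?thesis by (simp add: sum_dual)
qed

lemma Jsum_uminus_right: "Jsum a (- a) = of_nat (card (UNIV :: 'a set)) * delta a - c a"
proof -
  have "Jsum a (- a) = (\<Sum>t\<in>dual - {c}. t a)"
    unfolding Jsum_def
    by (intro sum.cong) (auto simp: chmul_def chinv_def dual_uminus dual_nonzero i_dual)
  also have "\<dots> = (\<Sum>u\<in>dual. u a) - c a"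
    using sum.remove[OF finite_dual c_dual, of "\<lambda>u. u a"] by simp
  finally show ?thesis by (simp add: sum_dual)
qed

end

(* Expanding (B), each term containing a delta is evaluated where J has one of the known
   values, so a case distinction on which deltas vanish reduces (B) to the claim. *)
lemma jacobi_cocycle_expanded:
  fixes J :: "'a::ab_group_add \<Rightarrow> 'a \<Rightarrow> complex" and m :: complex
  assumes "m \<noteq> 0"
    and sym: "\<And>x y. J x y = J y x"
    and zero: "\<And>x. m * J x 0 = m * delta x - 1"
    and inverse: "\<And>x. m * J x (- x) = m * delta x - c x"
    and c_uminus: "\<And>x. c (- x) = c x" and "c 0 = 1"
    and cocycle: "Jstar J a b * Jstar J (a + b) g = Jstar J a (b + g) * Jstar J b g"
  shows "c a * (m * delta (a + b)) + m * J (a + b) g * (m * J a b)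
       = c g * (m * delta (g + b)) + m * J (g + b) a * (m * J g b)"
proof -
  have neg: "x + y = 0 \<longleftrightarrow> y = - x" for x y :: 'a
    by (metis add.commute eq_neg_iff_add_eq_0)
  have J0: "J x 0 = delta x - 1 / m" "J 0 x = delta x - 1 / m" for x
    using zero[of x] sym[of 0 x] \<open>m \<noteq> 0\<close> by (simp_all add: field_simps)
  have Jn: "J x (- x) = delta x - c x / m" "J (- x) x = delta x - c x / m" for x
    using inverse[of x] inverse[of "- x"] \<open>m \<noteq> 0\<close> c_uminus[of x]
    by (simp_all add: field_simps delta_def)
  have "c a * (m * delta (a + b)) + m * J (a + b) g * (m * J a b)
      = c b * (m * delta (b + g)) + m * J a (b + g) * (m * J b g)"
    using cocycle unfolding Jstar_def
    by (cases "a = 0"; cases "b = 0"; cases "g = 0"; cases "b = - a"; cases "g = - b")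
       (simp_all add: delta_def J0 Jn neg c_uminus \<open>c 0 = 1\<close> \<open>m \<noteq> 0\<close> field_simps)
  moreover have "c g * (m * delta (g + b)) = c b * (m * delta (b + g))"
    using c_uminus[of b] by (simp add: delta_def add.commute neg)
  moreover have "J (g + b) a = J a (b + g)"
    using sym[of "g + b" a] by (simp add: add.commute)
  ultimately show ?thesis by (simp only: sym[of g b])
qed

theorem mainTheorem11:
  fixes J :: "'a::{ab_group_add,finite} \<Rightarrow> 'a \<Rightarrow> complex"
    and c :: "'a \<Rightarrow> complex"
    and i :: "('a \<Rightarrow> complex) \<Rightarrow> ('a \<Rightarrow> complex)"
    and a b g :: 'a
  assumes "jacobi J"
    and "c \<in> dual"
    and "chmul c c = chone"
    and "bij_betw i (dual - {c}) (dual - {chone})"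
    and "\<forall>x\<in>dual - {c}. i x = chmul x (i (chinv x))"
    and "\<forall>a b. J a b = (1 / of_nat (card (UNIV :: 'a set))) *
           (\<Sum>x\<in>dual - {c}. i x a * chmul (i x) (chinv x) b)"
  shows "(\<Sum>(x, y, z)\<in>{(x, y, z). x \<in> dual \<and> y \<in> dual \<and> z \<in> dual \<and>
              oplus c i (oplus c i (Some x) (Some y)) (Some z) = Some chone}.
            x a * y b * z g)
       = (\<Sum>(x, y, z)\<in>{(x, y, z). x \<in> dual \<and> y \<in> dual \<and> z \<in> dual \<and>
              oplus c i (Some x) (oplus c i (Some y) (Some z)) = Some chone}.
            x a * y b * z g)"
proof -
  interpret dual_oplus c i using assms(2-5) by unfold_locales
  define m :: complex where "m = of_nat (card (UNIV :: 'a set))"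
  have "m \<noteq> 0" by (simp add: m_def)
  have mJ: "Jsum x y = m * J x y" for x y
    using assms(6) \<open>m \<noteq> 0\<close> by (simp add: m_def Jsum_def)
  have J_sym: "\<And>x y. J x y = J y x"
    and cocycle: "Jstar J a b * Jstar J (a + b) g = Jstar J a (b + g) * Jstar J b g"
    using assms(1) unfolding jacobi_def by blast+
  have J_zero: "m * J x 0 = m * delta x - 1" and J_uminus: "m * J x (- x) = m * delta x - c x" for x
    using Jsum_zero_right[of x] Jsum_uminus_right[of x] by (simp_all add: mJ m_def)
  have "(\<Sum>(x, y, z)\<in>left_solutions. x a * y b * z g)
      = c a * (m * delta (a + b)) + m * J (a + b) g * (m * J a b)"
    by (simp add: sum_left_solutions sum_dual m_def[symmetric] mJ)
  also have "\<dots> = c g * (m * delta (g + b)) + m * J (g + b) a * (m * J g b)"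
    using jacobi_cocycle_expanded[OF \<open>m \<noteq> 0\<close> J_sym J_zero J_uminus c_uminus
        dual_zero[OF c_dual] cocycle] .
  also have "\<dots> = (\<Sum>(x, y, z)\<in>right_solutions. x a * y b * z g)"
    by (simp add: sum_right_solutions sum_left_solutions sum_dual m_def[symmetric] mJ)
  finally show ?thesis
    unfolding left_solutions_def right_solutions_def .
qed

end
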